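(* Let $\operatorname{P}\in\operatorname{MM}(A,\theta,S)$, let $i\in S_j$, and suppose $0\le|A_{y,S_j}|\le1$ for all $y\in\mathbb{Y}_{S_j}^{\neq}$. Then for every $\tilde\theta_i\in(0,1)$, the proportional $\tilde\theta_i$-covariation scheme minimizes the CD distance $\mathcal{D}_{\operatorname{CD}}(\sigma(\operatorname{P}),\operatorname{P})$ among all $\tilde\theta_i$-covariation schemes $\sigma$.
   Context: Let $\mathbb{Y}$ be a finite set with $q$ elements. A monomial model $\operatorname{MM}(A,\theta,S)$ is given by $A\in\mathcal{M}_{q\times k}(\mathbb{Z}_{\ge0})$ with rows $A_y$, parameters $\theta\in\mathbb{R}^k_{>0}$, and a partition $S=\{S_1,\dots,S_n\}$ of $[k]$ with each block $(\theta_l)_{l\in S_m}$ in the open probability simplex; $\operatorname{P}(y)=\prod_l\theta_l^{A_{y,l}}$, a probability distribution for every such parameter. $|A_{y,S_j}|=\sum_{l\in S_j}A_{y,l}$; $\mathbb{Y}_{S_j}^{\neq}=\{y\in\mathbb{Y}: A_{y,l}\ne0\text{ for some }l\in S_j\}$. A $\tilde\theta_i$-covariation scheme $\sigma$ maps $\theta$ to $\tilde\theta$ with $\tilde\theta_i$ given, $\tilde\theta_l=\theta_l$ for $l\notin S_j$, and $(\tilde\theta_l)_{l\in S_j}$ in the open simplex; $\sigma(\operatorname{P})(y)=\tilde\theta^{A_y}$. The proportional scheme sets $\tilde\theta_k=\frac{1-\tilde\theta_i}{1-\theta_i}\theta_k$ for $k\in S_j\setminus\{i\}$. The CD distance is $\mathcal{D}_{\operatorname{CD}}(\tilde{\operatorname{P}},\operatorname{P})=\log\max_{y}\frac{\tilde{\operatorname{P}}(y)}{\operatorname{P}(y)}-\log\min_y\frac{\tilde{\operatorname{P}}(y)}{\operatorname{P}(y)}$.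 *)

theory Defs
  imports Complex_Main
begin

text \<open>Parameters are functions nat => real; only the indices in {1..k} matter.\<close>

definition open_simplex :: "nat set \<Rightarrow> (nat \<Rightarrow> real) \<Rightarrow> bool" where
  "open_simplex B t \<longleftrightarrow> (\<forall>l\<in>B. t l > 0) \<and> (\<Sum>l\<in>B. t l) = 1"

definition is_partition :: "nat set set \<Rightarrow> nat \<Rightarrow> bool" where
  "is_partition S k \<longleftrightarrow> (\<forall>B\<in>S. B \<noteq> {}) \<and>
     (\<forall>B\<in>S. \<forall>C\<in>S. B \<noteq> C \<longrightarrow> B \<inter> C = {}) \<and> \<Union>S = {1..k}"

definition valid_param :: "nat \<Rightarrow> nat set set \<Rightarrow> (nat \<Rightarrow> real) \<Rightarrow> bool" where
  "valid_param k S t \<longleftrightarrow> (\<forall>l\<in>{1..k}. t l > 0) \<and> (\<forall>B\<in>S. open_simplex B t)"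

definition mono_prob :: "nat \<Rightarrow> ('y \<Rightarrow> nat \<Rightarrow> nat) \<Rightarrow> (nat \<Rightarrow> real) \<Rightarrow> 'y \<Rightarrow> real" where
  "mono_prob k A t y = (\<Prod>l\<in>{1..k}. t l ^ A y l)"

definition monomial_model ::
  "'y set \<Rightarrow> nat \<Rightarrow> ('y \<Rightarrow> nat \<Rightarrow> nat) \<Rightarrow> nat set set \<Rightarrow> (nat \<Rightarrow> real) \<Rightarrow> bool" where
  "monomial_model Y k A S \<theta> \<longleftrightarrow> finite Y \<and> Y \<noteq> {} \<and> is_partition S k \<and>
     valid_param k S \<theta> \<and>
     (\<forall>t. valid_param k S t \<longrightarrow> (\<Sum>y\<in>Y. mono_prob k A t y) = 1)"

text \<open>theta' is the image of theta under a ti-covariation scheme for index i in block Sj.\<close>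
definition covariation :: "nat \<Rightarrow> nat set \<Rightarrow> nat \<Rightarrow> real \<Rightarrow> (nat \<Rightarrow> real) \<Rightarrow> (nat \<Rightarrow> real) \<Rightarrow> bool" where
  "covariation k Sj i ti \<theta> \<theta>' \<longleftrightarrow> \<theta>' i = ti \<and> (\<forall>l\<in>{1..k} - Sj. \<theta>' l = \<theta> l) \<and>
     open_simplex Sj \<theta>'"

definition proportional :: "nat set \<Rightarrow> nat \<Rightarrow> real \<Rightarrow> (nat \<Rightarrow> real) \<Rightarrow> nat \<Rightarrow> real" where
  "proportional Sj i ti \<theta> l =
     (if l = i then ti else if l \<in> Sj then (1 - ti) / (1 - \<theta> i) * \<theta> l else \<theta> l)"

definition CD_dist :: "'y set \<Rightarrow> ('y \<Rightarrow> real) \<Rightarrow> ('y \<Rightarrow> real) \<Rightarrow> real" where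
  "CD_dist Y P' P = ln (Max ((\<lambda>y. P' y / P y) ` Y)) - ln (Min ((\<lambda>y. P' y / P y) ` Y))"

end

theory Submission
  imports Defs
begin

text \<open>Write \<open>a = ti / \<theta> i\<close> and \<open>q = (1 - ti) / (1 - \<theta> i)\<close>. Because every outcome has degree
  at most one in the block \<open>Sj\<close>, a covariation \<open>\<theta>'\<close> changes \<open>P(y)\<close> by the factor 1 if \<open>y\<close> does
  not involve \<open>Sj\<close>, and by \<open>\<theta>' m / \<theta> m\<close> if it involves \<open>m \<in> Sj\<close>. For the proportional scheme
  these factors lie in \<open>{1, a, q}\<close> and 1 lies between \<open>a\<close> and \<open>q\<close>, so its CD distance is at most
  \<open>\<bar>ln a - ln q\<bar>\<close>. For an arbitrary scheme, the fact that the model sums to one for every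
  parameter forces each index of \<open>Sj\<close> to occur in some outcome as soon as one does, so all
  factors \<open>\<theta>' m / \<theta> m\<close> occur; they include \<open>a\<close>, and those with \<open>m \<noteq> i\<close> have \<open>\<theta>\<close>-weighted mean
  \<open>q\<close>, so one of them is at least and one at most \<open>q\<close>. If no outcome involves \<open>Sj\<close>, no scheme
  changes \<open>P\<close> at all.\<close>

lemma mono_prob_pos:
  assumes "\<forall>l\<in>{1..k}. 0 < t l"
  shows "0 < mono_prob k A t y"
  using assms unfolding mono_prob_def by (auto intro!: prod_pos)

lemma mono_prob_fun_upd:
  assumes "l \<in> {1..k}" "t l \<noteq> 0"
  shows "mono_prob k A (t(l := x)) y = mono_prob k A t y * (x / t l) ^ A y l"
proof -
  have "mono_prob k A (t(l := x)) y = x ^ A y l * (\<Prod>m\<in>{1..k}-{l}. t m ^ A y m)"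
    using assms(1) unfolding mono_prob_def by (simp add: prod.remove)
  moreover have "mono_prob k A t y = t l ^ A y l * (\<Prod>m\<in>{1..k}-{l}. t m ^ A y m)"
    using assms(1) unfolding mono_prob_def by (simp add: prod.remove)
  ultimately show ?thesis
    using assms(2) by (simp add: power_divide)
qed

lemma mono_prob_eq_if_unused:
  assumes "\<forall>l\<in>B. A y l = 0" "\<forall>l\<in>{1..k} - B. t l = t' l"
  shows "mono_prob k A t y = mono_prob k A t' y"
  unfolding mono_prob_def
proof (rule prod.cong[OF refl])
  fix l assume "l \<in> {1..k}"
  then show "t l ^ A y l = t' l ^ A y l"
    using assms by (cases "l \<in> B") auto
qed

lemma mono_prob_ratio:
  assumes "B \<subseteq> {1..k}" "\<forall>l\<in>{1..k}. \<theta> l \<noteq> 0" "\<forall>l\<in>{1..k} - B. t l = \<theta> l"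
  shows "mono_prob k A t y / mono_prob k A \<theta> y = (\<Prod>l\<in>B. (t l / \<theta> l) ^ A y l)"
proof -
  have "mono_prob k A t y = (\<Prod>l\<in>{1..k}. \<theta> l ^ A y l * (t l / \<theta> l) ^ A y l)"
    unfolding mono_prob_def using assms(2)
    by (intro prod.cong) (simp_all add: power_mult_distrib[symmetric])
  also have "\<dots> = mono_prob k A \<theta> y * (\<Prod>l\<in>{1..k}. (t l / \<theta> l) ^ A y l)"
    by (simp add: prod.distrib mono_prob_def)
  also have "(\<Prod>l\<in>{1..k}. (t l / \<theta> l) ^ A y l) = (\<Prod>l\<in>B. (t l / \<theta> l) ^ A y l)"
    by (rule prod.mono_neutral_right) (use assms in auto)
  finally show ?thesis
    using assms(2) by (simp add: mono_prob_def)
qed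

lemma prod_power_eq_single:
  fixes f :: "'a \<Rightarrow> 'b::comm_monoid_mult" and e :: "'a \<Rightarrow> nat"
  assumes "finite B" "m \<in> B" "e m \<noteq> 0" "sum e B \<le> 1"
  shows "(\<Prod>l\<in>B. f l ^ e l) = f m"
proof -
  have "sum e B = e m + sum e (B - {m})"
    using assms(1,2) by (simp add: sum.remove)
  then have "e m = 1" "sum e (B - {m}) = 0"
    using assms(3,4) by linarith+
  then have "e m = 1" "\<forall>l\<in>B - {m}. e l = 0"
    using assms(1) by simp_all
  then show ?thesis
    using assms(1,2) by (simp add: prod.remove)
qed

lemma ex_ratio_ge_mean:
  fixes x w :: "'a \<Rightarrow> real"
  assumes "finite B" "B \<noteq> {}" "\<forall>m\<in>B. 0 < w m" "sum x B = q * sum w B"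
  shows "\<exists>m\<in>B. q \<le> x m / w m"
proof (rule ccontr)
  assume "\<not> ?thesis"
  then have "\<forall>m\<in>B. x m < q * w m"
    using assms(3) by (auto simp: not_le pos_divide_less_eq)
  then have "sum x B < (\<Sum>m\<in>B. q * w m)"
    using assms(1,2) by (intro sum_strict_mono) auto
  then show False
    using assms(4) by (simp add: sum_distrib_left)
qed

lemma ex_ratio_le_mean:
  fixes x w :: "'a \<Rightarrow> real"
  assumes "finite B" "B \<noteq> {}" "\<forall>m\<in>B. 0 < w m" "sum x B = q * sum w B"
  shows "\<exists>m\<in>B. x m / w m \<le> q"
  using ex_ratio_ge_mean[of B w "\<lambda>m. - x m" "- q"] assms by (auto simp: sum_negf)

lemma CD_dist_le:
  assumes "finite Y" "Y \<noteq> {}" "0 < \<mu>" "\<forall>y\<in>Y. \<mu> \<le> P' y / P y \<and> P' y / P y \<le> M"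
  shows "CD_dist Y P' P \<le> ln M - ln \<mu>"
proof -
  let ?R = "(\<lambda>y. P' y / P y) ` Y"
  have "\<mu> \<le> Min ?R" "Max ?R \<le> M"
    using assms by (simp_all add: Min_ge_iff Max_le_iff)
  moreover obtain y where "y \<in> Y"
    using assms(2) by blast
  then have "Min ?R \<le> Max ?R"
    using assms(1) by (intro order.trans[OF Min_le Max_ge]) auto
  ultimately have "ln (Max ?R) \<le> ln M" "ln \<mu> \<le> ln (Min ?R)"
    using assms(3) by simp_all
  then show ?thesis
    unfolding CD_dist_def by simp
qed

lemma CD_dist_ge:
  assumes "finite Y" "\<forall>y\<in>Y. 0 < P' y / P y" "y1 \<in> Y" "y2 \<in> Y"
    and "0 < M" "M \<le> P' y1 / P y1" "0 < \<mu>" "P' y2 / P y2 \<le> \<mu>"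
  shows "ln M - ln \<mu> \<le> CD_dist Y P' P"
proof -
  let ?R = "(\<lambda>y. P' y / P y) ` Y"
  have "M \<le> Max ?R"
    using assms(1,3,6) by (intro order.trans[OF _ Max_ge]) auto
  moreover have "Min ?R \<le> \<mu>"
    using assms(1,4,8) by (intro order.trans[OF Min_le]) auto
  moreover have "0 < Min ?R"
    using assms(1-3) by (subst Min_gr_iff) auto
  ultimately have "ln M \<le> ln (Max ?R)" "ln (Min ?R) \<le> ln \<mu>"
    using assms(5) by simp_all
  then show ?thesis
    unfolding CD_dist_def by simp
qed

lemma sum_mult_power_less:
  fixes f :: "'a \<Rightarrow> real"
  assumes "finite Y" "\<forall>y\<in>Y. 0 < f y" "0 \<le> r" "r < 1" "y0 \<in> Y" "e y0 \<noteq> 0"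
  shows "(\<Sum>y\<in>Y. f y * r ^ e y) < sum f Y"
proof (rule sum_strict_mono_ex1[OF assms(1)])
  show "\<forall>y\<in>Y. f y * r ^ e y \<le> f y"
    using assms(2-4) by (simp add: less_imp_le mult_left_le power_le_one)
  have "r ^ e y0 < 1"
    using assms(3,4,6) by (simp add: power_less_one_iff)
  then show "\<exists>y\<in>Y. f y * r ^ e y < f y"
    using assms(2,5) by (auto simp: mult_less_cancel_left1)
qed

lemma valid_param_block_update:
  assumes "is_partition S k" "valid_param k S \<theta>" "Sj \<in> S"
    and "\<forall>l\<in>{1..k} - Sj. t l = \<theta> l" "open_simplex Sj t"
  shows "valid_param k S t"
  unfolding valid_param_def
proof (intro conjI ballI)
  fix l assume "l \<in> {1..k}"
  then show "0 < t l"
    using assms(2,4,5) unfolding valid_param_def open_simplex_def by (cases "l \<in> Sj") auto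
next
  fix B assume B: "B \<in> S"
  show "open_simplex B t"
  proof (cases "B = Sj")
    case False
    then have "B \<inter> Sj = {}" "B \<subseteq> {1..k}"
      using assms(1,3) B unfolding is_partition_def by auto
    then have "\<forall>l\<in>B. t l = \<theta> l"
      using assms(4) by blast
    moreover have "open_simplex B \<theta>"
      using assms(2) B unfolding valid_param_def by blast
    ultimately show ?thesis
      unfolding open_simplex_def by simp
  qed (use assms(5) in simp)
qed

lemma min_le_one_le_max_odds:
  fixes x y :: real
  assumes "0 < x" "x < 1" "y < 1"
  shows "min (y / x) ((1 - y) / (1 - x)) \<le> 1 \<and> 1 \<le> max (y / x) ((1 - y) / (1 - x))"
proof (cases "y \<le> x")
  case True
  then have "y / x \<le> 1" "1 \<le> (1 - y) / (1 - x)"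
    using assms by simp_all
  then show ?thesis by linarith
next
  case False
  then have "1 \<le> y / x" "(1 - y) / (1 - x) \<le> 1"
    using assms by simp_all
  then show ?thesis by linarith
qed

text \<open>For \<open>0 < x, y < 1\<close> this is \<open>\<bar>logit y - logit x\<bar>\<close>, the absolute log odds ratio.\<close>
definition log_odds_spread :: "real \<Rightarrow> real \<Rightarrow> real" where
  "log_odds_spread x y =
     ln (max (y / x) ((1 - y) / (1 - x))) - ln (min (y / x) ((1 - y) / (1 - x)))"

locale monomial_block =
  fixes Y :: "'y set" and k :: nat and A :: "'y \<Rightarrow> nat \<Rightarrow> nat"
    and S :: "nat set set" and \<theta> :: "nat \<Rightarrow> real" and Sj :: "nat set"
  assumes model: "monomial_model Y k A S \<theta>" and block: "Sj \<in> S"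
begin

lemma finite_Y: "finite Y"
  and Y_nonempty: "Y \<noteq> {}"
  and partition: "is_partition S k"
  and valid_theta: "valid_param k S \<theta>"
  and total_prob: "valid_param k S t \<Longrightarrow> (\<Sum>y\<in>Y. mono_prob k A t y) = 1"
  using model unfolding monomial_model_def by auto

lemma block_subset: "Sj \<subseteq> {1..k}"
  using partition block unfolding is_partition_def by auto

lemma finite_block: "finite Sj"
  using block_subset finite_subset by blast

lemma theta_pos: "\<forall>l\<in>{1..k}. 0 < \<theta> l"
  using valid_theta unfolding valid_param_def by blast

lemma block_sum: "(\<Sum>l\<in>Sj. \<theta> l) = 1"
  using valid_theta block unfolding valid_param_def open_simplex_def by blast

lemma valid_param_covariation:
  assumes "covariation k Sj i ti \<theta> \<theta>'"
  shows "valid_param k S \<theta>'"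
  using assms valid_param_block_update[OF partition valid_theta block]
  unfolding covariation_def by blast

lemma valid_param_mass_shift:
  assumes "l \<in> Sj" "l0 \<in> Sj" "l \<noteq> l0" "0 < c" "c < \<theta> l0"
  shows "valid_param k S (\<theta>(l := \<theta> l + c, l0 := \<theta> l0 - c))"
    (is "valid_param k S ?t")
proof (rule valid_param_block_update[OF partition valid_theta block])
  have shift: "?t m = \<theta> m + (if m = l then c else 0) - (if m = l0 then c else 0)" for m
    using assms(3) by simp
  show "open_simplex Sj ?t"
    unfolding open_simplex_def
  proof
    have "0 < \<theta> l"
      using theta_pos block_subset assms(1) by auto
    then show "\<forall>m\<in>Sj. 0 < ?t m"
      using theta_pos block_subset assms by auto
    show "(\<Sum>m\<in>Sj. ?t m) = 1"
      unfolding shift using block_sum finite_block assms(1,2) by (simp add: sum.distrib sum_subtractf)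
  qed
  show "\<forall>m\<in>{1..k} - Sj. ?t m = \<theta> m"
    using assms(1,2) by auto
qed

text \<open>Moving half of the mass of \<open>\<theta> l0\<close> onto an index \<open>l\<close> that no outcome uses keeps the
  parameter valid but strictly decreases the total probability.\<close>
lemma block_support:
  assumes "y0 \<in> Y" "l0 \<in> Sj" "A y0 l0 \<noteq> 0" "l \<in> Sj"
  shows "\<exists>y\<in>Y. A y l \<noteq> 0"
proof (rule ccontr)
  assume "\<not> ?thesis"
  then have unused: "\<forall>y\<in>Y. A y l = 0"
    by blast
  then have "l \<noteq> l0"
    using assms(1,3) by auto
  have indices: "l \<in> {1..k}" "l0 \<in> {1..k}"
    using assms(2,4) block_subset by auto
  then have pos: "0 < \<theta> l" "0 < \<theta> l0"
    using theta_pos by auto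
  define t where "t = \<theta>(l := \<theta> l + \<theta> l0 / 2, l0 := \<theta> l0 - \<theta> l0 / 2)"
  have "valid_param k S t"
    unfolding t_def using assms(2,4) \<open>l \<noteq> l0\<close> pos by (intro valid_param_mass_shift) auto
  then have "(\<Sum>y\<in>Y. mono_prob k A t y) = 1"
    by (rule total_prob)
  moreover have "(\<Sum>y\<in>Y. mono_prob k A t y) = (\<Sum>y\<in>Y. mono_prob k A \<theta> y * (1/2) ^ A y l0)"
  proof (rule sum.cong[OF refl])
    fix y assume "y \<in> Y"
    have "mono_prob k A t y
        = mono_prob k A (\<theta>(l := \<theta> l + \<theta> l0 / 2)) y * ((\<theta> l0 - \<theta> l0 / 2) / \<theta> l0) ^ A y l0"
      unfolding t_def using indices \<open>l \<noteq> l0\<close> pos by (simp add: mono_prob_fun_upd)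
    also have "mono_prob k A (\<theta>(l := \<theta> l + \<theta> l0 / 2)) y = mono_prob k A \<theta> y"
      using indices pos unused \<open>y \<in> Y\<close> by (simp add: mono_prob_fun_upd)
    finally show "mono_prob k A t y = mono_prob k A \<theta> y * (1/2) ^ A y l0"
      using pos by simp
  qed
  moreover have "(\<Sum>y\<in>Y. mono_prob k A \<theta> y * (1/2) ^ A y l0) < (\<Sum>y\<in>Y. mono_prob k A \<theta> y)"
    using finite_Y mono_prob_pos[OF theta_pos, of A] assms(1,3) by (intro sum_mult_power_less) auto
  ultimately show False
    using total_prob[OF valid_theta] by argo
qed

lemma ratio_eq_one_if_block_unused:
  assumes "\<forall>l\<in>{1..k} - Sj. t l = \<theta> l" "\<forall>l\<in>Sj. A y l = 0"
  shows "mono_prob k A t y / mono_prob k A \<theta> y = 1"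
  using mono_prob_eq_if_unused[of Sj A y k t \<theta>] assms mono_prob_pos[OF theta_pos, of A y] by simp

lemma theta_lt_one_if_covariation:
  assumes "covariation k Sj i ti \<theta> \<theta>'" "i \<in> Sj" "ti < 1"
  shows "\<theta> i < 1"
proof -
  have "(\<Sum>l\<in>Sj - {i}. \<theta>' l) = 1 - ti"
    using assms finite_block unfolding covariation_def open_simplex_def by (simp add: sum_diff1)
  then have "Sj - {i} \<noteq> {}"
    using assms(3) by force
  then have "0 < (\<Sum>l\<in>Sj - {i}. \<theta> l)"
    using finite_block theta_pos block_subset by (intro sum_pos) auto
  then show ?thesis
    using block_sum assms(2) finite_block by (simp add: sum_diff1)
qed

lemma covariation_ratios_around_mean:
  assumes "covariation k Sj i ti \<theta> \<theta>'" "i \<in> Sj" "ti < 1"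
  shows "\<exists>l\<in>Sj. (1 - ti) / (1 - \<theta> i) \<le> \<theta>' l / \<theta> l"
    and "\<exists>l\<in>Sj. \<theta>' l / \<theta> l \<le> (1 - ti) / (1 - \<theta> i)"
proof -
  have theta_i: "\<theta> i < 1"
    by (rule theta_lt_one_if_covariation[OF assms])
  have rest_sum: "(\<Sum>l\<in>Sj - {i}. \<theta> l) = 1 - \<theta> i"
    using block_sum finite_block assms(2) by (simp add: sum_diff1)
  then have "Sj - {i} \<noteq> {}"
    using theta_i by force
  moreover have "\<forall>l\<in>Sj - {i}. 0 < \<theta> l"
    using theta_pos block_subset by auto
  moreover have "(\<Sum>l\<in>Sj - {i}. \<theta>' l) = (1 - ti) / (1 - \<theta> i) * (\<Sum>l\<in>Sj - {i}. \<theta> l)"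
    using assms rest_sum theta_i finite_block
    unfolding covariation_def open_simplex_def by (simp add: sum_diff1)
  ultimately show "\<exists>l\<in>Sj. (1 - ti) / (1 - \<theta> i) \<le> \<theta>' l / \<theta> l"
    and "\<exists>l\<in>Sj. \<theta>' l / \<theta> l \<le> (1 - ti) / (1 - \<theta> i)"
    using ex_ratio_ge_mean[OF finite_Diff[OF finite_block]]
      ex_ratio_le_mean[OF finite_Diff[OF finite_block]] by (metis DiffD1)+
qed

lemma covariation_proportional:
  assumes "i \<in> Sj" "0 < ti" "ti < 1" "\<theta> i < 1"
  shows "covariation k Sj i ti \<theta> (proportional Sj i ti \<theta>)"
  unfolding covariation_def open_simplex_def
proof (intro conjI ballI)
  let ?p = "proportional Sj i ti \<theta>"
  show p_i: "?p i = ti"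
    unfolding proportional_def by simp
  show "\<And>l. l \<in> {1..k} - Sj \<Longrightarrow> ?p l = \<theta> l"
    using assms(1) unfolding proportional_def by auto
  show "0 < ?p l" if "l \<in> Sj" for l
    using that assms theta_pos block_subset unfolding proportional_def by auto
  have "(\<Sum>l\<in>Sj. ?p l) = ?p i + (\<Sum>l\<in>Sj - {i}. ?p l)"
    by (rule sum.remove[OF finite_block assms(1)])
  also have "(\<Sum>l\<in>Sj - {i}. ?p l) = (1 - ti) / (1 - \<theta> i) * (\<Sum>l\<in>Sj - {i}. \<theta> l)"
    unfolding proportional_def by (simp add: sum_distrib_left)
  also have "\<dots> = 1 - ti"
    using block_sum assms(1,4) finite_block by (simp add: sum_diff1)
  finally show "(\<Sum>l\<in>Sj. ?p l) = 1"
    using p_i by simp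
qed

end

locale monomial_block_deg_le_one = monomial_block +
  assumes block_deg_le_one: "\<forall>y\<in>Y. (\<Sum>l\<in>Sj. A y l) \<le> 1"
begin

lemma ratio_eq_if_block_used:
  assumes "\<forall>l\<in>{1..k} - Sj. t l = \<theta> l" "y \<in> Y" "m \<in> Sj" "A y m \<noteq> 0"
  shows "mono_prob k A t y / mono_prob k A \<theta> y = t m / \<theta> m"
proof -
  have "mono_prob k A t y / mono_prob k A \<theta> y = (\<Prod>l\<in>Sj. (t l / \<theta> l) ^ A y l)"
    using block_subset theta_pos assms(1) by (intro mono_prob_ratio) auto
  also have "\<dots> = t m / \<theta> m"
    using finite_block block_deg_le_one assms(2-4) by (intro prod_power_eq_single[where e = "A y"]) auto
  finally show ?thesis .
qed

lemma ratio_realized: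
  assumes "\<forall>l\<in>{1..k} - Sj. t l = \<theta> l" "y0 \<in> Y" "l0 \<in> Sj" "A y0 l0 \<noteq> 0" "m \<in> Sj"
  shows "\<exists>y\<in>Y. mono_prob k A t y / mono_prob k A \<theta> y = t m / \<theta> m"
  using block_support[OF assms(2-5)] ratio_eq_if_block_used[OF assms(1) _ assms(5)] by blast

lemma CD_dist_proportional_le:
  assumes "i \<in> Sj" "0 < ti" "ti < 1" "\<theta> i < 1"
  shows "CD_dist Y (mono_prob k A (proportional Sj i ti \<theta>)) (mono_prob k A \<theta>)
    \<le> log_odds_spread (\<theta> i) ti"
proof -
  define p where "p = proportional Sj i ti \<theta>"
  define a where "a = ti / \<theta> i"
  define q where "q = (1 - ti) / (1 - \<theta> i)"
  have off: "\<forall>l\<in>{1..k} - Sj. p l = \<theta> l"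
    using covariation_proportional[OF assms] unfolding covariation_def p_def by blast
  have theta_i: "0 < \<theta> i"
    using theta_pos block_subset assms(1) by auto
  have straddle: "min a q \<le> 1 \<and> 1 \<le> max a q"
    unfolding a_def q_def using min_le_one_le_max_odds theta_i assms(3,4) by blast
  have ratio_bounds: "min a q \<le> mono_prob k A p y / mono_prob k A \<theta> y
      \<and> mono_prob k A p y / mono_prob k A \<theta> y \<le> max a q" if "y \<in> Y" for y
  proof (cases "\<forall>l\<in>Sj. A y l = 0")
    case True
    then have "mono_prob k A p y / mono_prob k A \<theta> y = 1"
      by (rule ratio_eq_one_if_block_unused[OF off])
    then show ?thesis
      using straddle by simp
  next
    case False
    then obtain m where m: "m \<in> Sj" "A y m \<noteq> 0"
      by blast
    have "0 < \<theta> m"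
      using theta_pos block_subset m(1) by auto
    then have "p m / \<theta> m = (if m = i then a else q)"
      using m(1) unfolding p_def proportional_def a_def q_def by auto
    then show ?thesis
      using ratio_eq_if_block_used[OF off that m] by simp
  qed
  have "0 < min a q"
    unfolding a_def q_def using theta_i assms(2-4) by simp
  then have "CD_dist Y (mono_prob k A p) (mono_prob k A \<theta>) \<le> ln (max a q) - ln (min a q)"
    using ratio_bounds by (intro CD_dist_le[OF finite_Y Y_nonempty]) auto
  then show ?thesis
    unfolding log_odds_spread_def p_def a_def q_def .
qed

lemma CD_dist_covariation_ge:
  assumes "covariation k Sj i ti \<theta> \<theta>'" "i \<in> Sj" "ti < 1"
    and "y0 \<in> Y" "l0 \<in> Sj" "A y0 l0 \<noteq> 0"
  shows "log_odds_spread (\<theta> i) ti \<le> CD_dist Y (mono_prob k A \<theta>') (mono_prob k A \<theta>)"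
proof -
  define a where "a = ti / \<theta> i"
  define q where "q = (1 - ti) / (1 - \<theta> i)"
  have off: "\<forall>l\<in>{1..k} - Sj. \<theta>' l = \<theta> l" and theta'_i: "\<theta>' i = ti"
    using assms(1) unfolding covariation_def by auto
  have theta'_pos: "\<forall>l\<in>{1..k}. 0 < \<theta>' l"
    using valid_param_covariation[OF assms(1)] unfolding valid_param_def by blast
  have ratio_pos: "\<forall>y\<in>Y. 0 < mono_prob k A \<theta>' y / mono_prob k A \<theta> y"
    using mono_prob_pos[OF theta'_pos, of A] mono_prob_pos[OF theta_pos, of A] by simp
  have theta_i: "0 < \<theta> i" "\<theta> i < 1"
    using theta_pos block_subset assms(2) theta_lt_one_if_covariation[OF assms(1-3)] by auto
  have a_pos: "0 < a"
    unfolding a_def using theta'_pos theta'_i theta_i block_subset assms(2) by auto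
  have q_pos: "0 < q"
    unfolding q_def using theta_i assms(3) by simp
  obtain l1 l2 where
    l1: "l1 \<in> Sj" "q \<le> \<theta>' l1 / \<theta> l1" and l2: "l2 \<in> Sj" "\<theta>' l2 / \<theta> l2 \<le> q"
    using covariation_ratios_around_mean[OF assms(1-3)] unfolding q_def by blast
  have realized: "\<exists>y\<in>Y. mono_prob k A \<theta>' y / mono_prob k A \<theta> y = \<theta>' m / \<theta> m" if "m \<in> Sj" for m
    by (rule ratio_realized[OF off assms(4-6) that])
  have a_realized: "\<theta>' i / \<theta> i = a"
    unfolding a_def theta'_i ..
  obtain y_top where "y_top \<in> Y" "max a q \<le> mono_prob k A \<theta>' y_top / mono_prob k A \<theta> y_top"
    using realized[OF assms(2)] realized[OF l1(1)] l1(2) a_realized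
    by (cases "q \<le> a") (auto simp: max_def)
  moreover obtain y_bot where "y_bot \<in> Y" "mono_prob k A \<theta>' y_bot / mono_prob k A \<theta> y_bot \<le> min a q"
    using realized[OF assms(2)] realized[OF l2(1)] l2(2) a_realized
    by (cases "a \<le> q") (auto simp: min_def)
  ultimately have "ln (max a q) - ln (min a q) \<le> CD_dist Y (mono_prob k A \<theta>') (mono_prob k A \<theta>)"
    using a_pos q_pos by (intro CD_dist_ge[OF finite_Y ratio_pos]) auto
  then show ?thesis
    unfolding log_odds_spread_def a_def q_def .
qed

end

theorem theorem3:
  fixes Y :: "'y set" and k :: nat and A :: "'y \<Rightarrow> nat \<Rightarrow> nat"
    and S :: "nat set set" and \<theta> :: "nat \<Rightarrow> real" and Sj :: "nat set" and i :: nat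
    and ti :: real and \<theta>' :: "nat \<Rightarrow> real"
  assumes "monomial_model Y k A S \<theta>"
    and "Sj \<in> S" and "i \<in> Sj"
    and "\<forall>y\<in>Y. (\<exists>l\<in>Sj. A y l \<noteq> 0) \<longrightarrow> 0 \<le> (\<Sum>l\<in>Sj. A y l) \<and> (\<Sum>l\<in>Sj. A y l) \<le> 1"
    and "0 < ti" and "ti < 1"
    and "covariation k Sj i ti \<theta> \<theta>'"
  shows "covariation k Sj i ti \<theta> (proportional Sj i ti \<theta>) \<and>
         CD_dist Y (mono_prob k A (proportional Sj i ti \<theta>)) (mono_prob k A \<theta>)
           \<le> CD_dist Y (mono_prob k A \<theta>') (mono_prob k A \<theta>)"
proof -
  have "\<forall>y\<in>Y. (\<Sum>l\<in>Sj. A y l) \<le> 1"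
    using assms(4) by (metis sum.neutral zero_le_one)
  then interpret monomial_block_deg_le_one Y k A S \<theta> Sj
    using assms(1,2) by unfold_locales
  let ?p = "proportional Sj i ti \<theta>"
  have theta_i: "\<theta> i < 1"
    by (rule theta_lt_one_if_covariation[OF assms(7,3,6)])
  have cov: "covariation k Sj i ti \<theta> ?p"
    by (rule covariation_proportional[OF assms(3,5,6) theta_i])
  have "CD_dist Y (mono_prob k A ?p) (mono_prob k A \<theta>) \<le> CD_dist Y (mono_prob k A \<theta>') (mono_prob k A \<theta>)"
  proof (cases "\<exists>y\<in>Y. \<exists>l\<in>Sj. A y l \<noteq> 0")
    case True
    then obtain y0 l0 where "y0 \<in> Y" "l0 \<in> Sj" "A y0 l0 \<noteq> 0"
      by blast
    then show ?thesis
      using CD_dist_proportional_le[OF assms(3,5,6) theta_i] CD_dist_covariation_ge[OF assms(7,3,6)]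
      by fastforce
  next
    case False
    have "\<forall>l\<in>{1..k} - Sj. ?p l = \<theta>' l"
      using cov assms(7) unfolding covariation_def by simp
    then have "mono_prob k A ?p y = mono_prob k A \<theta>' y" if "y \<in> Y" for y
      using False that by (intro mono_prob_eq_if_unused[of Sj]) auto
    then show ?thesis
      unfolding CD_dist_def by (simp cong: image_cong)
  qed
  with cov show ?thesis ..
qed

end
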